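(* For every integer $n\ge 0$, \[ \sum_{k=0}^{n}(-4)^k\frac{\binom{n}{k}}{\binom{2k}{k}}H_{2k} =\frac{2H_{2n}-H_n}{2(2n-1)}-\frac{4n}{(2n-1)^2}. \]
   Context: For an integer $m\ge 0$, $H_m$ denotes the $m$-th harmonic number: $H_0=0$ and $H_m=\sum_{j=1}^m \frac1j$ for $m\ge1$. $\binom{n}{k}$ is the usual binomial coefficient. *)

theory Defs
  imports "HOL-Analysis.Analysis"
begin

end

theory Submission
  imports Defs
begin

text \<open>Let \<open>a(k) = (-4)^k C(n,k) / C(2k,k)\<close>. The term ratio \<open>a(k+1)/a(k) = -2(n-k)/(2k+1)\<close>
  makes \<open>a\<close> Gosper-summable: \<open>G(k) = (1-2k) a(k) / (2n-1)\<close> satisfies \<open>G(k+1) - G(k) = a(k)\<close>,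
  whence \<open>\<Sum>k\<le>n. a(k) = -1/(2n-1)\<close>. Summation by parts against \<open>H(2k)\<close> reduces the theorem
  to this sum and to \<open>\<Sum>k<n. a(k+1)/(k+1) = H(n) - 2 H(2n)\<close>, which follows by induction on \<open>n\<close>
  from Pascal's rule.\<close>

lemma sum_lessThan_by_parts:
  fixes F h :: "nat \<Rightarrow> 'a::comm_ring"
  shows "(\<Sum>k<m. (F (Suc k) - F k) * h k)
    = F m * h m - F 0 * h 0 - (\<Sum>k<m. F (Suc k) * (h (Suc k) - h k))"
  by (induction m) (simp_all add: algebra_simps)

lemma two_real_minus_1_neq_0: "2 * real n - 1 \<noteq> 0"
proof
  assume "2 * real n - 1 = 0"
  then have "2 * n = 1" by linarith
  then show False by presburger
qed

lemma central_binomial_Suc: "(2 * Suc k choose Suc k) * Suc k = 2 * (2 * k + 1) * (2 * k choose k)"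
proof -
  have pascal: "(Suc (2 * k) choose k) * Suc k = Suc (2 * k) * (2 * k choose k)"
    by (metis Suc_times_binomial_eq binomial_symmetric le_add2 mult.commute mult_2 diff_add_inverse2 add_Suc_right)
  have "(2 * Suc k choose Suc k) * Suc k * Suc k = Suc (Suc (2 * k)) * ((Suc (2 * k) choose k) * Suc k)"
    by (metis Suc_times_binomial mult_2 add_Suc_right add_Suc mult.commute mult.assoc)
  also have "\<dots> = 2 * (2 * k + 1) * (2 * k choose k) * Suc k"
    unfolding pascal by simp
  finally show ?thesis by (metis mult_right_cancel nat.distinct(1))
qed

lemma binomial_Suc_mult: "real (n choose Suc k) * (real k + 1) = (real n - real k) * real (n choose k)"
proof -
  have "real (Suc n) * real (n choose k) = real (Suc n choose Suc k) * real (Suc k)"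
    by (metis Suc_times_binomial_eq of_nat_mult)
  then show ?thesis by (simp add: algebra_simps)
qed

lemma harm_double_Suc:
  "harm (2 * Suc k) = (harm (2 * k) :: real) + 1 / (2 * real k + 1) + 1 / (2 * real k + 2)"
  by (simp add: harm_Suc inverse_eq_divide add_ac)

definition binom_quot :: "nat \<Rightarrow> nat \<Rightarrow> real" where
  "binom_quot n k = (-4)^k * (real (n choose k) / real ((2*k) choose k))"

lemma binom_quot_0 [simp]: "binom_quot n 0 = 1"
  by (simp add: binom_quot_def)

lemma binom_quot_eq_0: "n < k \<Longrightarrow> binom_quot n k = 0"
  by (simp add: binom_quot_def)

lemma binom_quot_mult_central: "binom_quot n k * real (2 * k choose k) = (-4)^k * real (n choose k)"
proof -
  have "real (2 * k choose k) \<noteq> 0" by simp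
  then show ?thesis unfolding binom_quot_def by simp
qed

lemma binom_quot_Suc:
  "binom_quot n (Suc k) * (2 * real k + 1) = - 2 * (real n - real k) * binom_quot n k"
proof -
  define c where "c = real (2 * k choose k)"
  define c' where "c' = real (2 * Suc k choose Suc k)"
  have "c > 0" unfolding c_def by simp
  have central: "c' * (real k + 1) = 2 * (2 * real k + 1) * c"
    unfolding c_def c'_def using central_binomial_Suc[of k, THEN arg_cong[where f = real]]
    by (simp only: of_nat_mult of_nat_Suc of_nat_add of_nat_numeral of_nat_1 add.commute)
  have "binom_quot n (Suc k) * (2 * real k + 1) * (2 * c) = binom_quot n (Suc k) * (c' * (real k + 1))"
    unfolding central by (simp add: algebra_simps)
  also have "\<dots> = (-4)^Suc k * (real (n choose Suc k) * (real k + 1))"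
    unfolding c'_def by (simp only: binom_quot_mult_central mult.assoc[symmetric])
  also have "\<dots> = - 2 * (real n - real k) * binom_quot n k * (2 * c)"
    using \<open>c > 0\<close> unfolding binomial_Suc_mult binom_quot_def c_def[symmetric]
    by (simp add: field_simps)
  finally show ?thesis
    using \<open>c > 0\<close> by simp
qed

lemma binom_quot_Suc_Suc:
  "(real n + 1) * (binom_quot (Suc n) (Suc k) - binom_quot n (Suc k))
    = (real k + 1) * binom_quot (Suc n) (Suc k)"
proof -
  define c where "c = real (2 * Suc k choose Suc k)"
  define p where "p = (-4::real) ^ Suc k"
  have bq: "binom_quot m (Suc k) = p * real (m choose Suc k) / c" for m
    unfolding binom_quot_def c_def p_def by simp
  have absorb: "(real n + 1) * real (n choose k) = (real k + 1) * real (Suc n choose Suc k)"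
    using Suc_times_binomial_eq[of n k, THEN arg_cong[where f = real]]
    by (simp only: of_nat_mult of_nat_Suc add.commute mult.commute)
  have "(real n + 1) * (binom_quot (Suc n) (Suc k) - binom_quot n (Suc k))
      = p * ((real n + 1) * real (n choose k)) / c"
    unfolding bq by (simp add: algebra_simps diff_divide_distrib[symmetric])
  also have "\<dots> = (real k + 1) * binom_quot (Suc n) (Suc k)"
    unfolding absorb bq by (simp del: binomial_Suc_Suc)
  finally show ?thesis .
qed

definition binom_quot_antidiff :: "nat \<Rightarrow> nat \<Rightarrow> real" where
  "binom_quot_antidiff n k = (1 - 2 * real k) * binom_quot n k / (2 * real n - 1)"

lemma binom_quot_antidiff_Suc:
  "binom_quot_antidiff n (Suc k) - binom_quot_antidiff n k = binom_quot n k"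
proof -
  define D where "D = 2 * real n - 1"
  have "D \<noteq> 0" unfolding D_def by (rule two_real_minus_1_neq_0)
  have step: "(1 - 2 * real (Suc k)) * binom_quot n (Suc k) = 2 * (real n - real k) * binom_quot n k"
    using binom_quot_Suc[of n k] by (simp add: algebra_simps)
  have "binom_quot_antidiff n (Suc k) - binom_quot_antidiff n k
      = (2 * (real n - real k) * binom_quot n k - (1 - 2 * real k) * binom_quot n k) / D"
    unfolding binom_quot_antidiff_def D_def[symmetric] diff_divide_distrib[symmetric] step ..
  also have "\<dots> = D * binom_quot n k / D"
    unfolding D_def by (simp add: algebra_simps)
  finally show ?thesis
    using \<open>D \<noteq> 0\<close> by simp
qed

lemma sum_binom_quot: "(\<Sum>k\<le>n. binom_quot n k) = - 1 / (2 * real n - 1)"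
proof -
  have "(\<Sum>k\<le>n. binom_quot n k) = (\<Sum>k<Suc n. binom_quot_antidiff n (Suc k) - binom_quot_antidiff n k)"
    by (simp add: lessThan_Suc_atMost binom_quot_antidiff_Suc)
  also have "\<dots> = binom_quot_antidiff n (Suc n) - binom_quot_antidiff n 0"
    by (rule sum_lessThan_telescope)
  finally show ?thesis
    by (simp add: binom_quot_antidiff_def binom_quot_eq_0)
qed

lemma sum_binom_quot_Suc: "(\<Sum>k<n. binom_quot n (Suc k)) = - 1 / (2 * real n - 1) - 1"
  using sum_binom_quot[of n] unfolding lessThan_Suc_atMost[symmetric] sum.lessThan_Suc_shift by simp

lemma sum_binom_quot_Suc_div:
  "(\<Sum>k<n. binom_quot n (Suc k) / (real k + 1)) = harm n - 2 * harm (2 * n)"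
proof (induction n)
  case 0
  then show ?case by (simp add: harm_def)
next
  case (Suc n)
  have diff: "(binom_quot (Suc n) (Suc k) - binom_quot n (Suc k)) / (real k + 1)
      = binom_quot (Suc n) (Suc k) / (real n + 1)" for k
    using binom_quot_Suc_Suc[of n k] by (simp add: frac_eq_eq algebra_simps)
  have split: "binom_quot (Suc n) (Suc k) / (real k + 1)
      = binom_quot n (Suc k) / (real k + 1) + binom_quot (Suc n) (Suc k) / (real n + 1)" for k
    using diff[of k] unfolding diff_divide_distrib by linarith
  have "(\<Sum>k<Suc n. binom_quot (Suc n) (Suc k) / (real k + 1))
      = (\<Sum>k<Suc n. binom_quot n (Suc k) / (real k + 1))
        + (\<Sum>k<Suc n. binom_quot (Suc n) (Suc k)) / (real n + 1)"
    unfolding split sum.distrib sum_divide_distrib ..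
  also have "\<dots> = harm n - 2 * harm (2 * n) + (- 1 / (2 * real n + 1) - 1) / (real n + 1)"
    using Suc.IH sum_binom_quot_Suc[of "Suc n"] by (simp add: binom_quot_eq_0 add_ac)
  also have "(- 1 / (2 * real n + 1) - 1) / (real n + 1) = - 2 * (1 / (2 * real n + 1))"
    by (simp add: divide_simps)
  also have "harm n - 2 * harm (2 * n) + - 2 * (1 / (2 * real n + 1))
      = harm (Suc n) - 2 * harm (2 * Suc n)"
  proof -
    have "harm (Suc n) = harm n + 1 / (real n + 1)"
      by (simp add: harm_Suc inverse_eq_divide add.commute)
    moreover have "2 * (1 / (2 * real n + 2)) = 1 / (real n + 1)"
      by (simp add: divide_simps)
    ultimately show ?thesis
      unfolding harm_double_Suc by (simp add: algebra_simps)
  qed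
  finally show ?case .
qed

lemma binom_quot_antidiff_mult_harm_diff:
  "binom_quot_antidiff n (Suc k) * (harm (2 * Suc k) - harm (2 * k))
    = binom_quot n (Suc k) * (1 / (2 * real k + 2) - 2) / (2 * real n - 1)"
proof -
  have "(1 - 2 * real (Suc k)) * (harm (2 * Suc k) - harm (2 * k))
      = (1 - 2 * real (Suc k)) * (1 / (2 * real k + 1) + 1 / (2 * real k + 2))"
    unfolding harm_double_Suc by simp
  also have "\<dots> = 1 / (2 * real k + 2) - 2"
    by (simp add: divide_simps) (simp add: algebra_simps)
  finally have "(1 - 2 * real (Suc k)) * (harm (2 * Suc k) - harm (2 * k))
      = 1 / (2 * real k + 2) - 2" .
  then show ?thesis
    unfolding binom_quot_antidiff_def by (metis mult.commute mult.left_commute times_divide_eq_left)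
qed

lemma sum_binom_quot_mult_harm_double:
  "(\<Sum>k\<le>n. binom_quot n k * harm (2 * k))
    = (2 * (\<Sum>k<n. binom_quot n (Suc k)) - (\<Sum>k<n. binom_quot n (Suc k) / (real k + 1)) / 2)
      / (2 * real n - 1)"
proof -
  define G where "G = binom_quot_antidiff n"
  have "G (Suc n) = 0"
    unfolding G_def binom_quot_antidiff_def by (simp add: binom_quot_eq_0)
  have summand: "- (binom_quot n (Suc k) * (1 / (2 * real k + 2) - 2))
      = 2 * binom_quot n (Suc k) - binom_quot n (Suc k) / (real k + 1) / 2" for k
    by (simp add: divide_simps) (simp add: algebra_simps)
  have "(\<Sum>k\<le>n. binom_quot n k * harm (2 * k)) = (\<Sum>k<Suc n. (G (Suc k) - G k) * harm (2 * k))"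
    unfolding G_def binom_quot_antidiff_Suc lessThan_Suc_atMost ..
  also have "\<dots> = G (Suc n) * harm (2 * Suc n) - G 0 * harm (2 * 0)
      - (\<Sum>k<Suc n. G (Suc k) * (harm (2 * Suc k) - harm (2 * k)))"
    by (rule sum_lessThan_by_parts)
  also have "\<dots> = - (\<Sum>k<Suc n. G (Suc k) * (harm (2 * Suc k) - harm (2 * k)))"
    unfolding \<open>G (Suc n) = 0\<close> by (simp add: harm_def)
  also have "\<dots> = - (\<Sum>k<n. binom_quot n (Suc k) * (1 / (2 * real k + 2) - 2)) / (2 * real n - 1)"
    unfolding G_def binom_quot_antidiff_mult_harm_diff by (simp add: binom_quot_eq_0 sum_divide_distrib)
  also have "\<dots> = (\<Sum>k<n. 2 * binom_quot n (Suc k) - binom_quot n (Suc k) / (real k + 1) / 2)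
      / (2 * real n - 1)"
    by (simp only: sum_negf[symmetric] summand)
  finally show ?thesis
    unfolding sum_subtractf sum_distrib_left[symmetric] sum_divide_distrib[symmetric] .
qed

theorem theorem1:
  fixes n :: nat
  shows "(\<Sum>k=0..n. (-4::real)^k * (real (n choose k) / real ((2*k) choose k)) * harm (2*k))
    = (2 * harm (2*n) - harm n) / (2 * (2 * real n - 1)) - 4 * real n / (2 * real n - 1)^2"
proof -
  define D where "D = 2 * real n - 1"
  have "D \<noteq> 0"
    unfolding D_def by (rule two_real_minus_1_neq_0)
  have "(\<Sum>k=0..n. (-4::real)^k * (real (n choose k) / real ((2*k) choose k)) * harm (2*k))
      = (\<Sum>k\<le>n. binom_quot n k * harm (2 * k))"
    unfolding binom_quot_def atLeast0AtMost ..
  also have "\<dots> = (2 * (- 1 / D - 1) - (harm n - 2 * harm (2 * n)) / 2) / D"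
    unfolding sum_binom_quot_mult_harm_double sum_binom_quot_Suc sum_binom_quot_Suc_div D_def ..
  also have "\<dots> = (2 * harm (2*n) - harm n) / (2 * D) - 2 * (D + 1) / D^2"
    using \<open>D \<noteq> 0\<close> by (simp add: field_simps power2_eq_square)
  also have "2 * (D + 1) = 4 * real n"
    unfolding D_def by simp
  finally show ?thesis
    unfolding D_def .
qed

end
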